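(* Let $q\in\mathbb R$ and let $\mu$ be a compactly supported Borel probability measure on $\mathbb R^n$ satisfying the doubling condition. Then for every $E\subseteq\operatorname{supp}\mu$, $\mathsf B^q_\mu(E)=\operatorname{Dim}^q_\mu(E)$.
   Context: $B(x,r)$ is the closed ball. $\mu$ satisfies the doubling condition if $\limsup_{r\searrow0}\sup_{x\in\operatorname{supp}\mu}\mu(B(x,2r))/\mu(B(x,r))<\infty$. Hewitt–Stromberg side: a centred packing of $E$ by $r$-balls is a family $(B(x_i,r))_i$ of pairwise disjoint closed balls with $x_i\in E$; $M^q_{\mu,r}(E)=\sup\sum_i\mu(B(x_i,r))^q$ over such packings; $\mathsf C^{q,t}_\mu(E)=\limsup_{r\to0}M^q_{\mu,r}(E)(2r)^t$; $\mathsf P^{q,t}_\mu(E)=\inf\{\sum_i\mathsf C^{q,t}_\mu(E_i):E\subseteq\bigcup_iE_i,\ E_i\text{ bounded}\}$; $\mathsf B^q_\mu(E)$ is the unique $t$ with $\mathsf P^{q,s}_\mu(E)=\infty$ for $s<t$ and $=0$ for $s>t$. Olsen's multifractal packing side: a centred $\delta$-packing of $E$ is a family $(B(x_i,r_i))_i$ of pairwise disjoint closed balls with $x_i\in E$ and $r_i\le\delta$; $\overline{\mathcal P}^{q,t}_\mu(E)=\inf_{\delta>0}\sup\sum_i\mu(B(x_i,r_i))^q(2r_i)^t$ (sup over centred $\delta$-packings of $E$); $\mathcal P^{q,t}_\mu(E)=\inf\{\sum_i\overline{\mathcal P}^{q,t}_\mu(E_i):E\subseteq\bigcup_iE_i\}$;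 $\operatorname{Dim}^q_\mu(E)=\inf\{t:\mathcal P^{q,t}_\mu(E)=0\}=\sup\{t:\mathcal P^{q,t}_\mu(E)=\infty\}$. *)

theory Defs
  imports "HOL-Analysis.Analysis" "HOL-Probability.Probability_Measure"
begin

definition msupp :: "'a::metric_space measure \<Rightarrow> 'a set" where
  "msupp M = {x. \<forall>e>0. 0 < measure M (ball x e)}"

definition doubling :: "'a::metric_space measure \<Rightarrow> bool" where
  "doubling M \<longleftrightarrow>
     Limsup (at_right (0::real))
       (\<lambda>r. SUP x\<in>msupp M. ereal (measure M (cball x (2*r)) / measure M (cball x r))) < \<infinity>"

definition centred_r_packings :: "'a::metric_space set \<Rightarrow> real \<Rightarrow> 'a set set" where
  "centred_r_packings E r =
     {S. S \<subseteq> E \<and> (\<forall>x\<in>S. \<forall>y\<in>S. x \<noteq> y \<longrightarrow> cball x r \<inter> cball y r = {})}"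

definition HS_M :: "'a::metric_space measure \<Rightarrow> real \<Rightarrow> real \<Rightarrow> 'a set \<Rightarrow> ennreal" where
  "HS_M M q r E = (SUP S\<in>centred_r_packings E r.
       (\<Sum>\<^sub>\<infinity>x\<in>S. ennreal (measure M (cball x r) powr q)))"

definition HS_C :: "'a::metric_space measure \<Rightarrow> real \<Rightarrow> real \<Rightarrow> 'a set \<Rightarrow> ennreal" where
  "HS_C M q t E = Limsup (at_right (0::real)) (\<lambda>r. HS_M M q r E * ennreal ((2*r) powr t))"

definition HS_P :: "'a::metric_space measure \<Rightarrow> real \<Rightarrow> real \<Rightarrow> 'a set \<Rightarrow> ennreal" where
  "HS_P M q t E = (INF F\<in>{F::nat \<Rightarrow> 'a set. E \<subseteq> (\<Union>i. F i) \<and> (\<forall>i. bounded (F i))}.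
       (\<Sum>i. HS_C M q t (F i)))"

definition HS_dim :: "'a::metric_space measure \<Rightarrow> real \<Rightarrow> 'a set \<Rightarrow> ereal" where
  "HS_dim M q E = (THE t::ereal. \<forall>s::real.
       (ereal s < t \<longrightarrow> HS_P M q s E = \<infinity>) \<and> (t < ereal s \<longrightarrow> HS_P M q s E = 0))"

definition centred_delta_packings :: "'a::metric_space set \<Rightarrow> real \<Rightarrow> ('a set \<times> ('a \<Rightarrow> real)) set" where
  "centred_delta_packings E \<delta> =
     {(S, r). S \<subseteq> E \<and> (\<forall>x\<in>S. 0 < r x \<and> r x \<le> \<delta>) \<and>
        (\<forall>x\<in>S. \<forall>y\<in>S. x \<noteq> y \<longrightarrow> cball x (r x) \<inter> cball y (r y) = {})}"

definition Olsen_Pbar :: "'a::metric_space measure \<Rightarrow> real \<Rightarrow> real \<Rightarrow> 'a set \<Rightarrow> ennreal" where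
  "Olsen_Pbar M q t E = (INF \<delta>\<in>{0<..}. SUP (S, r)\<in>centred_delta_packings E \<delta>.
       (\<Sum>\<^sub>\<infinity>x\<in>S. ennreal (measure M (cball x (r x)) powr q * (2 * r x) powr t)))"

definition Olsen_P :: "'a::metric_space measure \<Rightarrow> real \<Rightarrow> real \<Rightarrow> 'a set \<Rightarrow> ennreal" where
  "Olsen_P M q t E = (INF F\<in>{F::nat \<Rightarrow> 'a set. E \<subseteq> (\<Union>i. F i)}. (\<Sum>i. Olsen_Pbar M q t (F i)))"

definition Olsen_Dim :: "'a::metric_space measure \<Rightarrow> real \<Rightarrow> 'a set \<Rightarrow> ereal" where
  "Olsen_Dim M q E = (INF t\<in>{t::real. Olsen_P M q t E = 0}. ereal t)"

end

theory Submission
  imports Defs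
begin

text \<open>
  A centred packing by balls of one common radius is in particular a centred \<open>\<delta>\<close>-packing, so the
  Hewitt--Stromberg premeasure is dominated by Olsen's and \<open>B\<^sup>q\<^sub>\<mu>(E) \<le> Dim\<^sup>q\<^sub>\<mu>(E)\<close>.
  Conversely, sort the balls of a centred \<open>\<delta>\<close>-packing into dyadic levels, those of level \<open>k\<close>
  having radius in \<open>(\<delta>/2\<^sup>k\<^sup>+\<^sup>1, \<delta>/2\<^sup>k]\<close>. Shrunk to radius \<open>\<delta>/2\<^sup>k\<^sup>+\<^sup>1\<close> they form a centred packing of
  common radius, and by the doubling condition the shrinking changes each term
  \<open>\<mu>(B(x,r))\<^sup>q (2r)\<^sup>t\<close> by at most a constant factor. So if \<open>C\<^sup>q\<^sup>,\<^sup>t\<^sub>\<mu>(F) < \<infinity>\<close>, each level contributes a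
  bounded amount, and the extra factor \<open>(2r)\<^sup>\<epsilon>\<close> makes the levels a geometric series of size
  \<open>O(\<delta>\<^sup>\<epsilon>)\<close>. Hence \<open>P\<^sup>q\<^sup>,\<^sup>t\<^sup>+\<^sup>\<epsilon>\<^sub>\<mu>(F) = 0\<close> and \<open>Dim\<^sup>q\<^sub>\<mu>(E) \<le> B\<^sup>q\<^sub>\<mu>(E)\<close>.
\<close>

section \<open>Critical exponents as infima\<close>

lemma INF_zero_set_is_threshold:
  fixes P :: "real \<Rightarrow> ennreal"
  assumes zero_above_finite: "\<And>s s'. P s < top \<Longrightarrow> s < s' \<Longrightarrow> P s' = 0"
  defines "t \<equiv> INF s\<in>{s. P s = 0}. ereal s"
  shows "(ereal s < t \<longrightarrow> P s = \<infinity>) \<and> (t < ereal s \<longrightarrow> P s = 0)"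
proof (intro conjI impI)
  assume s: "ereal s < t"
  show "P s = \<infinity>"
  proof (rule ccontr)
    assume "P s \<noteq> \<infinity>"
    obtain z where z: "ereal s < ereal z" "ereal z < t" using ereal_dense2[OF s] by blast
    have "P z = 0" using zero_above_finite \<open>P s \<noteq> \<infinity>\<close> z(1) by (simp add: top.not_eq_extremum)
    hence "t \<le> ereal z" unfolding t_def by (intro INF_lower2[of z]) auto
    with z show False by simp
  qed
next
  assume "t < ereal s"
  then obtain s0 where "P s0 = 0" "s0 < s" unfolding t_def by (auto simp: INF_less_iff)
  thus "P s = 0" using zero_above_finite[of s0 s] by simp
qed

lemma threshold_unique:
  fixes P :: "real \<Rightarrow> ennreal"
  assumes "\<forall>s. (ereal s < t \<longrightarrow> P s = \<infinity>) \<and> (t < ereal s \<longrightarrow> P s = 0)"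
    and "\<forall>s. (ereal s < t' \<longrightarrow> P s = \<infinity>) \<and> (t' < ereal s \<longrightarrow> P s = 0)"
  shows "t = t'"
proof (rule ccontr)
  assume "t \<noteq> t'"
  hence "t < t' \<or> t' < t" by auto
  then obtain z where "t < ereal z \<and> ereal z < t' \<or> t' < ereal z \<and> ereal z < t"
    using ereal_dense2 by metis
  with assms show False by fastforce
qed

lemma threshold_eq_INF_zero_set:
  fixes P :: "real \<Rightarrow> ennreal"
  assumes "\<And>s s'. P s < top \<Longrightarrow> s < s' \<Longrightarrow> P s' = 0"
  shows "(THE t. \<forall>s. (ereal s < t \<longrightarrow> P s = \<infinity>) \<and> (t < ereal s \<longrightarrow> P s = 0))
           = (INF s\<in>{s. P s = 0}. ereal s)"
proof (rule the_equality)
  show threshold: "\<forall>s. (ereal s < (INF s\<in>{s. P s = 0}. ereal s) \<longrightarrow> P s = \<infinity>) \<and>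
            ((INF s\<in>{s. P s = 0}. ereal s) < ereal s \<longrightarrow> P s = 0)"
    by (intro allI INF_zero_set_is_threshold assms)
  show "t = (INF s\<in>{s. P s = 0}. ereal s)"
    if "\<forall>s. (ereal s < t \<longrightarrow> P s = \<infinity>) \<and> (t < ereal s \<longrightarrow> P s = 0)" for t
    using that threshold by (rule threshold_unique)
qed

lemma tendsto_ennreal_mult_powr_at_right_0:
  fixes A \<epsilon> :: real
  assumes "0 < \<epsilon>"
  shows "((\<lambda>r. ennreal (A * (2*r) powr \<epsilon>)) \<longlongrightarrow> 0) (at_right 0)"
proof -
  have "((\<lambda>r. 2*r) \<longlongrightarrow> 0) (at_right (0::real))"
    by (intro tendsto_eq_intros) (auto intro: tendsto_ident_at)
  hence "((\<lambda>r. (2*r) powr \<epsilon>) \<longlongrightarrow> 0) (at_right (0::real))"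
    using assms by (intro tendsto_zero_powrI) (auto simp: eventually_at_right_field)
  hence "((\<lambda>r. ennreal (A * (2*r) powr \<epsilon>)) \<longlongrightarrow> ennreal (A * 0)) (at_right 0)"
    by (intro tendsto_ennrealI tendsto_mult_left)
  thus ?thesis by simp
qed

lemma powr_le_powr_of_comparable:
  fixes a y c t :: real
  assumes "0 < a" "a \<le> y" "y \<le> c * a" "1 \<le> c"
  shows "y powr t \<le> c powr \<bar>t\<bar> * a powr t"
proof (cases "t \<ge> 0")
  case True
  have "y powr t \<le> (c * a) powr t" using assms True by (intro powr_mono2) auto
  also have "\<dots> = c powr \<bar>t\<bar> * a powr t" using assms True by (simp add: powr_mult)
  finally show ?thesis .
next
  case False
  have "y powr t \<le> a powr t" using assms False by (intro powr_mono2') auto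
  also have "\<dots> \<le> c powr \<bar>t\<bar> * a powr t"
    using assms ge_one_powr_ge_zero[of c "\<bar>t\<bar>"] by (simp add: mult_le_cancel_right1)
  finally show ?thesis .
qed

definition dyadic_level :: "real \<Rightarrow> real \<Rightarrow> nat" where
  "dyadic_level \<delta> r = nat \<lfloor>log 2 (\<delta> / r)\<rfloor>"

lemma dyadic_level_bounds:
  fixes r \<delta> :: real
  assumes "0 < r" "r \<le> \<delta>"
  shows "\<delta> / 2 ^ Suc (dyadic_level \<delta> r) < r" "r \<le> \<delta> / 2 ^ dyadic_level \<delta> r"
proof -
  define L where "L = log 2 (\<delta> / r)"
  define k where "k = dyadic_level \<delta> r"
  have ge1: "\<delta> / r \<ge> 1" using assms by simp
  hence "0 \<le> L" unfolding L_def by simp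
  hence "real k = of_int \<lfloor>L\<rfloor>" unfolding k_def L_def dyadic_level_def by simp
  hence k: "real k \<le> L" "L < real k + 1" by linarith+
  have L: "2 powr L = \<delta> / r" unfolding L_def using ge1 by simp
  have "2 powr real k \<le> 2 powr L" using k by (intro powr_mono) auto
  hence "2 ^ k \<le> \<delta> / r" by (simp only: L powr_realpow)
  moreover have "2 powr L < 2 powr (real k + 1)" using k by (intro powr_less_mono) auto
  hence "\<delta> / r < 2 powr real (Suc k)" by (simp only: L of_nat_Suc add.commute)
  hence "\<delta> / r < 2 ^ Suc k" by (simp only: powr_realpow zero_less_numeral)
  ultimately show "\<delta> / 2 ^ Suc (dyadic_level \<delta> r) < r" "r \<le> \<delta> / 2 ^ dyadic_level \<delta> r"
    using assms unfolding k_def by (simp_all add: field_simps del: power_Suc)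
qed

lemma divide_power_two_powr:
  fixes a \<epsilon> :: real
  assumes "0 < a"
  shows "(a / 2 ^ k) powr \<epsilon> = a powr \<epsilon> * ((1/2) powr \<epsilon>) ^ k"
proof -
  have "(2 ^ k) powr \<epsilon> = (2 powr \<epsilon>) ^ k"
    by (simp add: powr_powr powr_power mult.commute flip: powr_realpow)
  thus ?thesis using assms by (simp add: powr_divide powr_divide[of 1 2] power_one_over)
qed

lemma measure_cball_pos:
  fixes M :: "'a::metric_space measure"
  assumes "finite_measure M" "sets M = sets borel" "x \<in> msupp M" "0 < r"
  shows "0 < measure M (cball x r)"
proof -
  have "0 < measure M (ball x r)" using assms(3,4) unfolding msupp_def by auto
  also have "\<dots> \<le> measure M (cball x r)"
    using assms(2) by (intro finite_measure.finite_measure_mono[OF assms(1)]) auto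
  finally show ?thesis .
qed

lemma measure_cball_mono:
  fixes M :: "'a::metric_space measure"
  assumes "finite_measure M" "sets M = sets borel" "r \<le> r'"
  shows "measure M (cball x r) \<le> measure M (cball x r')"
  using assms(2,3) by (intro finite_measure.finite_measure_mono[OF assms(1)]) auto

definition doubling_below :: "'a::metric_space measure \<Rightarrow> real \<Rightarrow> real \<Rightarrow> bool" where
  "doubling_below M c r0 \<longleftrightarrow> (\<forall>x\<in>msupp M. \<forall>r. 0 < r \<longrightarrow> r < r0 \<longrightarrow>
     measure M (cball x (2*r)) \<le> c * measure M (cball x r))"

lemma doubling_imp_doubling_below:
  fixes M :: "'a::metric_space measure"
  assumes fm: "finite_measure M" and sets: "sets M = sets borel" and "doubling M"
  obtains c r0 where "1 \<le> c" "0 < r0" "doubling_below M c r0"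
proof -
  let ?ratio = "\<lambda>r. SUP x\<in>msupp M. ereal (measure M (cball x (2*r)) / measure M (cball x r))"
  have "Limsup (at_right 0) ?ratio \<noteq> \<infinity>" using \<open>doubling M\<close> unfolding doubling_def by simp
  then obtain N :: nat where "Limsup (at_right 0) ?ratio < ereal (real N)"
    unfolding less_PInf_Ex_of_nat ..
  from Limsup_lessD[OF this] obtain r0 where
    r0: "0 < r0" and bound: "\<And>r. 0 < r \<Longrightarrow> r < r0 \<Longrightarrow> ?ratio r < ereal (real N)"
    unfolding eventually_at_right_field by auto
  have "doubling_below M (max 1 (real N)) r0"
    unfolding doubling_below_def
  proof (intro ballI allI impI)
    fix x r assume x: "x \<in> msupp M" and r: "0 < r" "r < r0"
    have pos: "0 < measure M (cball x r)" by (rule measure_cball_pos[OF fm sets x r(1)])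
    have "ereal (measure M (cball x (2*r)) / measure M (cball x r)) \<le> ?ratio r"
      using x by (intro SUP_upper)
    also have "\<dots> < ereal (real N)" using bound[OF r] .
    finally have "measure M (cball x (2*r)) < real N * measure M (cball x r)"
      using pos by (simp add: divide_less_eq)
    also have "\<dots> \<le> max 1 (real N) * measure M (cball x r)"
      using pos by (intro mult_right_mono) auto
    finally show "measure M (cball x (2*r)) \<le> max 1 (real N) * measure M (cball x r)" by simp
  qed
  with r0 show ?thesis by (intro that[of "max 1 (real N)"]) simp_all
qed

section \<open>Comparing the two premeasures\<close>

lemma sum_le_HS_M:
  assumes "finite T" "T \<in> centred_r_packings F r"
  shows "ennreal (\<Sum>x\<in>T. measure M (cball x r) powr q) \<le> HS_M M q r F"
  unfolding HS_M_def using assms by (intro SUP_upper2[of T]) auto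

lemma HS_M_mono: "G \<subseteq> F \<Longrightarrow> HS_M M q r G \<le> HS_M M q r F"
  unfolding HS_M_def centred_r_packings_def by (rule SUP_subset_mono) auto

lemma HS_C_mono: "G \<subseteq> F \<Longrightarrow> HS_C M q t G \<le> HS_C M q t F"
  unfolding HS_C_def by (intro Limsup_mono always_eventually allI mult_right_mono HS_M_mono) auto

lemma Olsen_Pbar_mono: "G \<subseteq> F \<Longrightarrow> Olsen_Pbar M q t G \<le> Olsen_Pbar M q t F"
  unfolding Olsen_Pbar_def
  by (intro INF_mono bexI order.refl SUP_subset_mono) (auto simp: centred_delta_packings_def)

lemma HS_C_le_Olsen_Pbar: "HS_C M q t F \<le> Olsen_Pbar M q t F"
  unfolding Olsen_Pbar_def
proof (rule INF_greatest)
  fix \<delta> :: real assume "\<delta> \<in> {0<..}"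
  let ?S = "SUP (S, r)\<in>centred_delta_packings F \<delta>.
       (\<Sum>\<^sub>\<infinity>x\<in>S. ennreal (measure M (cball x (r x)) powr q * (2 * r x) powr t))"
  have "HS_M M q r F * ennreal ((2*r) powr t) \<le> ?S" if r: "0 < r" "r < \<delta>" for r
    unfolding HS_M_def SUP_mult_right_ennreal
  proof (rule SUP_least)
    fix S assume S: "S \<in> centred_r_packings F r"
    have "(\<Sum>\<^sub>\<infinity>x\<in>S. ennreal (measure M (cball x r) powr q)) * ennreal ((2*r) powr t)
        = (\<Sum>\<^sub>\<infinity>x\<in>S. ennreal (measure M (cball x r) powr q * (2 * r) powr t))"
      by (simp add: nonneg_infsum_complete SUP_mult_right_ennreal sum_distrib_right ennreal_mult
          del: sum_ennreal)
    also have "\<dots> \<le> ?S"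
      using S r by (intro SUP_upper2[of "(S, \<lambda>_. r)"])
        (auto simp: centred_delta_packings_def centred_r_packings_def)
    finally show "(\<Sum>\<^sub>\<infinity>x\<in>S. ennreal (measure M (cball x r) powr q)) * ennreal ((2*r) powr t) \<le> ?S" .
  qed
  hence "\<forall>\<^sub>F r in at_right 0. HS_M M q r F * ennreal ((2*r) powr t) \<le> ?S"
    using \<open>\<delta> \<in> {0<..}\<close> unfolding eventually_at_right_field by auto
  thus "HS_C M q t F \<le> ?S" unfolding HS_C_def by (rule Limsup_bounded)
qed

lemma HS_C_finite_imp_packing_bound:
  assumes "HS_C M q t F < top"
  obtains K b where "0 \<le> K" "0 < b"
    "\<And>r T. 0 < r \<Longrightarrow> r < b \<Longrightarrow> finite T \<Longrightarrow> T \<in> centred_r_packings F r \<Longrightarrow>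
       (\<Sum>x\<in>T. measure M (cball x r) powr q) * (2*r) powr t \<le> K"
proof -
  obtain n :: nat where "HS_C M q t F < of_nat n"
    using ennreal_Ex_less_of_nat[OF assms] by blast
  from Limsup_lessD[OF this[unfolded HS_C_def]] obtain b where b: "0 < b"
    and less: "\<And>r. 0 < r \<Longrightarrow> r < b \<Longrightarrow> HS_M M q r F * ennreal ((2*r) powr t) < of_nat n"
    unfolding eventually_at_right_field by auto
  have "(\<Sum>x\<in>T. measure M (cball x r) powr q) * (2*r) powr t \<le> real n"
    if "0 < r" "r < b" "finite T" "T \<in> centred_r_packings F r" for r T
  proof -
    have "ennreal ((\<Sum>x\<in>T. measure M (cball x r) powr q) * (2*r) powr t)
        = ennreal (\<Sum>x\<in>T. measure M (cball x r) powr q) * ennreal ((2*r) powr t)"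
      by (intro ennreal_mult) (auto intro: sum_nonneg)
    also have "\<dots> \<le> HS_M M q r F * ennreal ((2*r) powr t)"
      using that by (intro mult_right_mono sum_le_HS_M) auto
    also have "\<dots> < ennreal (real n)"
      using less[OF that(1,2)] by (simp add: ennreal_of_nat_eq_real_of_nat)
    finally show ?thesis by (subst (asm) ennreal_less_iff) (auto intro!: mult_nonneg_nonneg sum_nonneg)
  qed
  with b show ?thesis by (intro that[of "real n" b]) simp_all
qed

lemma HS_C_eq_0_above_finite:
  assumes "HS_C M q s F < top" and "s < s'"
  shows "HS_C M q s' F = 0"
proof -
  obtain n :: nat where "HS_C M q s F < of_nat n"
    using ennreal_Ex_less_of_nat[OF assms(1)] by blast
  hence "\<forall>\<^sub>F r in at_right 0. HS_M M q r F * ennreal ((2*r) powr s) < of_nat n"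
    unfolding HS_C_def by (rule Limsup_lessD)
  moreover have "\<forall>\<^sub>F r in at_right (0::real). 0 < r" by (rule eventually_at_right_less)
  ultimately have "\<forall>\<^sub>F r in at_right 0.
      HS_M M q r F * ennreal ((2*r) powr s') \<le> ennreal (real n * (2*r) powr (s' - s))"
  proof eventually_elim
    case (elim r)
    have "HS_M M q r F * ennreal ((2*r) powr s')
        = HS_M M q r F * ennreal ((2*r) powr s) * ennreal ((2*r) powr (s' - s))"
      by (simp add: mult.assoc flip: ennreal_mult powr_add)
    also have "\<dots> \<le> of_nat n * ennreal ((2*r) powr (s' - s))"
      using elim by (intro mult_right_mono) auto
    finally show ?case by (simp add: ennreal_mult ennreal_of_nat_eq_real_of_nat)
  qed
  hence "HS_C M q s' F \<le> Limsup (at_right 0) (\<lambda>r. ennreal (real n * (2*r) powr (s' - s)))"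
    unfolding HS_C_def by (rule Limsup_mono)
  also have "\<dots> = 0"
    using assms(2)
    by (intro lim_imp_Limsup[OF trivial_limit_at_right_real] tendsto_ennreal_mult_powr_at_right_0) simp
  finally show ?thesis by simp
qed

lemma HS_P_eq_0_above_finite:
  assumes "HS_P M q s E < top" and "s < s'"
  shows "HS_P M q s' E = 0"
proof -
  obtain F where F: "E \<subseteq> (\<Union>i. F i)" "\<forall>i. bounded (F i)" "(\<Sum>i. HS_C M q s (F i)) < top"
    using assms(1) unfolding HS_P_def by (auto simp: INF_less_iff)
  have "HS_P M q s' E \<le> (\<Sum>i. HS_C M q s' (F i))"
    unfolding HS_P_def using F by (intro INF_lower) auto
  also have "\<dots> = 0"
    using HS_C_eq_0_above_finite[OF ennreal_suminf_lessD[OF F(3)] assms(2)] by simp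
  finally show ?thesis by simp
qed

lemma HS_dim_eq_INF: "HS_dim M q E = (INF s\<in>{s. HS_P M q s E = 0}. ereal s)"
  unfolding HS_dim_def by (intro threshold_eq_INF_zero_set HS_P_eq_0_above_finite)

lemma HS_P_le_Olsen_P:
  assumes "bounded E"
  shows "HS_P M q t E \<le> Olsen_P M q t E"
  unfolding Olsen_P_def
proof (rule INF_greatest)
  fix F :: "nat \<Rightarrow> _ set" assume "F \<in> {F. E \<subseteq> (\<Union>i. F i)}"
  hence "HS_P M q t E \<le> (\<Sum>i. HS_C M q t (F i \<inter> E))"
    unfolding HS_P_def using assms by (intro INF_lower) (auto intro: bounded_subset)
  also have "\<dots> \<le> (\<Sum>i. Olsen_Pbar M q t (F i))"
    by (intro suminf_le summableI order.trans[OF HS_C_le_Olsen_Pbar Olsen_Pbar_mono]) auto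
  finally show "HS_P M q t E \<le> (\<Sum>i. Olsen_Pbar M q t (F i))" .
qed

section \<open>Dyadic decomposition of centred packings\<close>

lemma centred_r_packing_of_shrunk_delta_packing:
  assumes "(S, \<rho>) \<in> centred_delta_packings F \<delta>" "T \<subseteq> S" "\<And>x. x \<in> T \<Longrightarrow> r \<le> \<rho> x"
  shows "T \<in> centred_r_packings F r"
  unfolding centred_r_packings_def
proof (intro CollectI conjI ballI impI)
  show "T \<subseteq> F" using assms(1,2) unfolding centred_delta_packings_def by auto
  fix x y assume xy: "x \<in> T" "y \<in> T" "x \<noteq> y"
  moreover have "x \<in> S" "y \<in> S" using xy assms(2) by auto
  ultimately have "cball x (\<rho> x) \<inter> cball y (\<rho> y) = {}"
    using assms(1) unfolding centred_delta_packings_def by simp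
  moreover have "cball x r \<subseteq> cball x (\<rho> x)" "cball y r \<subseteq> cball y (\<rho> y)"
    using assms(3)[OF xy(1)] assms(3)[OF xy(2)] by auto
  ultimately show "cball x r \<inter> cball y r = {}" by blast
qed

lemma doubling_term_le_dyadic:
  fixes M :: "'a::metric_space measure"
  assumes fm: "finite_measure M" and sets: "sets M = sets borel"
    and c: "1 \<le> c" and dbl: "doubling_below M c r0" and x: "x \<in> msupp M"
    and \<rho>: "0 < \<rho>" "\<rho> \<le> \<delta>" and "\<delta> \<le> r0" and "0 \<le> \<epsilon>"
  defines "k \<equiv> dyadic_level \<delta> \<rho>"
  defines "r \<equiv> \<delta> / 2 ^ Suc k"
  shows "measure M (cball x \<rho>) powr q * (2*\<rho>) powr (t + \<epsilon>)
    \<le> c powr \<bar>q\<bar> * 2 powr \<bar>t\<bar> * (2*\<delta>) powr \<epsilon> * ((1/2) powr \<epsilon>) ^ k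
       * (measure M (cball x r) powr q * (2*r) powr t)"
proof -
  let ?\<mu> = "\<lambda>s. measure M (cball x s)"
  have r: "r < \<rho>" "\<rho> \<le> 2 * r" "0 < r"
    using dyadic_level_bounds[OF \<rho>] \<rho> unfolding r_def k_def by auto
  have "?\<mu> \<rho> \<le> ?\<mu> (2 * r)" using r by (intro measure_cball_mono[OF fm sets]) auto
  also have "\<dots> \<le> c * ?\<mu> r"
    using dbl x r \<rho> \<open>\<delta> \<le> r0\<close> unfolding doubling_below_def by auto
  finally have "?\<mu> \<rho> powr q \<le> c powr \<bar>q\<bar> * ?\<mu> r powr q"
    using r c by (intro powr_le_powr_of_comparable measure_cball_pos[OF fm sets x]
      measure_cball_mono[OF fm sets]) auto
  moreover have "(2*\<rho>) powr t \<le> 2 powr \<bar>t\<bar> * (2*r) powr t"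
    using r by (intro powr_le_powr_of_comparable) auto
  moreover have "2 * \<rho> \<le> (2*\<delta>) / 2 ^ k"
    using dyadic_level_bounds(2)[OF \<rho>] unfolding k_def by simp
  hence "(2*\<rho>) powr \<epsilon> \<le> (2*\<delta>) powr \<epsilon> * ((1/2) powr \<epsilon>) ^ k"
    using \<rho> \<open>0 \<le> \<epsilon>\<close> by (auto intro: powr_mono2 simp flip: divide_power_two_powr)
  ultimately have "?\<mu> \<rho> powr q * ((2*\<rho>) powr t * (2*\<rho>) powr \<epsilon>)
      \<le> (c powr \<bar>q\<bar> * ?\<mu> r powr q) * ((2 powr \<bar>t\<bar> * (2*r) powr t)
         * ((2*\<delta>) powr \<epsilon> * ((1/2) powr \<epsilon>) ^ k))"
    by (intro mult_mono) auto
  thus ?thesis by (simp add: powr_add algebra_simps)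
qed

lemma delta_packing_sum_le:
  fixes M :: "'a::metric_space measure"
  assumes fm: "finite_measure M" and sets: "sets M = sets borel"
    and c: "1 \<le> c" and dbl: "doubling_below M c r0" and FS: "F \<subseteq> msupp M"
    and K: "0 \<le> K"
    and pack: "\<And>r T. 0 < r \<Longrightarrow> r < b \<Longrightarrow> finite T \<Longrightarrow> T \<in> centred_r_packings F r \<Longrightarrow>
       (\<Sum>x\<in>T. measure M (cball x r) powr q) * (2*r) powr t \<le> K"
    and \<epsilon>: "0 < \<epsilon>" and \<delta>: "0 < \<delta>" "\<delta> \<le> r0" "\<delta> \<le> b"
    and S: "(S, \<rho>) \<in> centred_delta_packings F \<delta>" and T: "finite T" "T \<subseteq> S"
  shows "(\<Sum>x\<in>T. measure M (cball x (\<rho> x)) powr q * (2 * \<rho> x) powr (t + \<epsilon>))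
    \<le> c powr \<bar>q\<bar> * 2 powr \<bar>t\<bar> * K / (1 - (1/2) powr \<epsilon>) * (2*\<delta>) powr \<epsilon>"
proof -
  define g :: real where "g = (1/2) powr \<epsilon>"
  have g: "0 < g" "g < 1" unfolding g_def using \<epsilon> powr_less_mono2[of \<epsilon> "1/2" 1] by auto
  define C where "C = c powr \<bar>q\<bar> * 2 powr \<bar>t\<bar> * (2*\<delta>) powr \<epsilon>"
  have C: "0 \<le> C" unfolding C_def by simp
  define level where "level x = dyadic_level \<delta> (\<rho> x)" for x
  define rad :: "nat \<Rightarrow> real" where "rad k = \<delta> / 2 ^ Suc k" for k
  define a where "a k x = measure M (cball x (rad k)) powr q * (2 * rad k) powr t" for k x
  have \<rho>: "0 < \<rho> x" "\<rho> x \<le> \<delta>" if "x \<in> T" for x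
    using S T that unfolding centred_delta_packings_def by auto
  have level_sum_le: "(\<Sum>x\<in>{x\<in>T. level x = k}. a k x) \<le> K" for k
  proof -
    have "(1::real) < 2 ^ Suc k" by (rule one_less_power) auto
    hence "rad k < \<delta>" unfolding rad_def using \<delta> by (simp add: divide_less_eq)
    moreover have "rad k \<le> \<rho> x" if "x \<in> T" "level x = k" for x
      using dyadic_level_bounds(1)[OF \<rho>[OF that(1)]] that(2) unfolding level_def rad_def by simp
    ultimately show ?thesis
      unfolding a_def sum_distrib_right[symmetric] using \<delta> T
      by (intro pack centred_r_packing_of_shrunk_delta_packing[OF S]) (auto simp: rad_def)
  qed
  have "(\<Sum>x\<in>T. measure M (cball x (\<rho> x)) powr q * (2 * \<rho> x) powr (t + \<epsilon>))
      \<le> (\<Sum>x\<in>T. C * g ^ level x * a (level x) x)"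
    using \<rho> FS S T \<epsilon> \<delta> unfolding C_def g_def a_def level_def rad_def centred_delta_packings_def
    by (intro sum_mono order.trans[OF doubling_term_le_dyadic[OF fm sets c dbl]])
      (auto simp: mult_ac)
  also have "\<dots> = (\<Sum>k\<in>level ` T. \<Sum>x\<in>{x\<in>T. level x = k}. C * g ^ level x * a (level x) x)"
    by (rule sum.image_gen[OF T(1)])
  also have "\<dots> = (\<Sum>k\<in>level ` T. C * g ^ k * (\<Sum>x\<in>{x\<in>T. level x = k}. a k x))"
    by (auto simp: sum_distrib_left intro!: sum.cong)
  also have "\<dots> \<le> (\<Sum>k\<in>level ` T. C * K * g ^ k)"
    using level_sum_le C g by (intro sum_mono) (simp add: mult_left_mono mult_ac)
  also have "\<dots> = C * K * (\<Sum>k\<in>level ` T. g ^ k)" by (simp add: sum_distrib_left)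
  also have "\<dots> \<le> C * K * (1 / (1 - g))"
  proof (intro mult_left_mono)
    have "(\<Sum>k\<in>level ` T. g ^ k) \<le> (\<Sum>k. g ^ k)"
      using g T by (intro sum_le_suminf summable_geometric) auto
    also have "\<dots> = 1 / (1 - g)" using g by (intro suminf_geometric) auto
    finally show "(\<Sum>k\<in>level ` T. g ^ k) \<le> 1 / (1 - g)" .
  qed (use C K in simp)
  finally show ?thesis unfolding C_def g_def by (simp add: field_simps)
qed

lemma infsum_ennreal_le_of_finite_sums:
  fixes f :: "'a \<Rightarrow> real"
  assumes "\<And>x. x \<in> S \<Longrightarrow> 0 \<le> f x" "\<And>T. finite T \<Longrightarrow> T \<subseteq> S \<Longrightarrow> (\<Sum>x\<in>T. f x) \<le> C"
  shows "(\<Sum>\<^sub>\<infinity>x\<in>S. ennreal (f x)) \<le> ennreal C"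
  unfolding nonneg_infsum_complete[OF zero_le]
proof (rule SUP_least, clarify)
  fix T assume "finite T" "T \<subseteq> S"
  thus "(\<Sum>x\<in>T. ennreal (f x)) \<le> ennreal C"
    using assms by (subst sum_ennreal) (auto intro: ennreal_leI)
qed

lemma Olsen_Pbar_eq_0_above_HS_C:
  fixes M :: "'a::metric_space measure"
  assumes fm: "finite_measure M" and sets: "sets M = sets borel"
    and c: "1 \<le> c" and r0: "0 < r0" and dbl: "doubling_below M c r0"
    and FS: "F \<subseteq> msupp M" and fin: "HS_C M q t F < top" and \<epsilon>: "0 < \<epsilon>"
  shows "Olsen_Pbar M q (t + \<epsilon>) F = 0"
proof -
  obtain K b where K: "0 \<le> K" and b: "0 < b"
    and pack: "\<And>r T. 0 < r \<Longrightarrow> r < b \<Longrightarrow> finite T \<Longrightarrow> T \<in> centred_r_packings F r \<Longrightarrow>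
       (\<Sum>x\<in>T. measure M (cball x r) powr q) * (2*r) powr t \<le> K"
    using HS_C_finite_imp_packing_bound[OF fin] by blast
  define A where "A = c powr \<bar>q\<bar> * 2 powr \<bar>t\<bar> * K / (1 - (1/2) powr \<epsilon>)"
  have "Olsen_Pbar M q (t + \<epsilon>) F \<le> ennreal (A * (2*\<delta>) powr \<epsilon>)"
    if \<delta>: "0 < \<delta>" "\<delta> < min r0 b" for \<delta>
    unfolding Olsen_Pbar_def
  proof (rule INF_lower2[of \<delta>], use \<delta> in simp, rule SUP_least, clarify)
    fix S \<rho> assume S: "(S, \<rho>) \<in> centred_delta_packings F \<delta>"
    hence "0 \<le> measure M (cball x (\<rho> x)) powr q * (2 * \<rho> x) powr (t + \<epsilon>)" if "x \<in> S" for x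
      using that unfolding centred_delta_packings_def by auto
    with S \<delta> show "(\<Sum>\<^sub>\<infinity>x\<in>S. ennreal (measure M (cball x (\<rho> x)) powr q * (2 * \<rho> x) powr (t + \<epsilon>)))
        \<le> ennreal (A * (2*\<delta>) powr \<epsilon>)"
      unfolding A_def
      by (intro infsum_ennreal_le_of_finite_sums delta_packing_sum_le[OF fm sets c dbl FS K pack \<epsilon>])
        auto
  qed
  hence "\<forall>\<^sub>F \<delta> in at_right 0. Olsen_Pbar M q (t + \<epsilon>) F \<le> ennreal (A * (2*\<delta>) powr \<epsilon>)"
    using r0 b unfolding eventually_at_right_field by (intro exI[of _ "min r0 b"]) auto
  hence "Olsen_Pbar M q (t + \<epsilon>) F \<le> 0"
    by (intro tendsto_lowerbound[OF tendsto_ennreal_mult_powr_at_right_0[OF \<epsilon>]]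
        trivial_limit_at_right_real)
  thus ?thesis by simp
qed

lemma Olsen_P_eq_0_above_HS_P:
  fixes M :: "'a::metric_space measure"
  assumes fm: "finite_measure M" and sets: "sets M = sets borel"
    and c: "1 \<le> c" and r0: "0 < r0" and dbl: "doubling_below M c r0"
    and E: "E \<subseteq> msupp M" and fin: "HS_P M q s E < top" and "s < s'"
  shows "Olsen_P M q s' E = 0"
proof -
  obtain F where F: "E \<subseteq> (\<Union>i. F i)" "(\<Sum>i. HS_C M q s (F i)) < top"
    using fin unfolding HS_P_def by (auto simp: INF_less_iff)
  have "HS_C M q s (F i \<inter> E) < top" for i
    using HS_C_mono[of "F i \<inter> E" "F i" M q s] ennreal_suminf_lessD[OF F(2), of i] by auto
  \<comment> \<open>The cover is cut down to \<open>E\<close> so that it lies in the support, where the doubling estimate holds.\<close>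
  hence "Olsen_Pbar M q (s + (s' - s)) (F i \<inter> E) = 0" for i
    using E \<open>s < s'\<close> by (intro Olsen_Pbar_eq_0_above_HS_C[OF fm sets c r0 dbl]) auto
  hence "Olsen_P M q s' E \<le> (\<Sum>i. 0)"
    unfolding Olsen_P_def using F(1) by (intro INF_lower2[of "\<lambda>i. F i \<inter> E"]) auto
  thus ?thesis by simp
qed

theorem proposition2p7:
  fixes M :: "'a::euclidean_space measure" and q :: real and E :: "'a set"
  assumes "sets M = sets borel"
    and "prob_space M"
    and "compact (msupp M)"
    and "doubling M"
    and "E \<subseteq> msupp M"
  shows "HS_dim M q E = Olsen_Dim M q E"
proof -
  have fm: "finite_measure M" using \<open>prob_space M\<close> unfolding prob_space_def by auto
  obtain c r0 where c: "1 \<le> c" "0 < r0" "doubling_below M c r0"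
    using doubling_imp_doubling_below[OF fm assms(1,4)] .
  have "bounded E" using assms(3,5) compact_imp_bounded bounded_subset by blast
  have "HS_P M q s E = 0" if "Olsen_P M q s E = 0" for s
    using HS_P_le_Olsen_P[OF \<open>bounded E\<close>, of M q s] that by simp
  hence "(INF s\<in>{s. HS_P M q s E = 0}. ereal s) \<le> (INF s\<in>{s. Olsen_P M q s E = 0}. ereal s)"
    by (intro INF_superset_mono) auto
  moreover have "(INF s\<in>{s. Olsen_P M q s E = 0}. ereal s) \<le> ereal s"
    if "HS_P M q s E = 0" for s
  proof (rule ereal_le_epsilon2)
    fix e :: real assume "0 < e"
    hence "Olsen_P M q (s + e) E = 0"
      using that by (intro Olsen_P_eq_0_above_HS_P[OF fm assms(1) c assms(5), of q s]) auto
    thus "(INF s\<in>{s. Olsen_P M q s E = 0}. ereal s) \<le> ereal s + ereal e"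
      by (intro INF_lower2[of "s + e"]) auto
  qed
  ultimately show ?thesis
    unfolding HS_dim_eq_INF Olsen_Dim_def by (intro antisym[OF _ INF_greatest]) auto
qed

end
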